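(* Let $m\ge2$, $s,\ell,r_1,\dots,r_m\ge1$ be integers, $k=m\ell-s$ with $k\ge\ell$, and $n=\sum_{i=1}^m(\ell+r_i)$. If $q$ is a prime power with $q>2(n-k)\binom{n-1}{k-1}$, then there exists an $[n,k,\ell;r_1,\dots,r_m]$-PMDS code over $\mathbb{F}_q$.
   Context: An $[n,k]$-MDS code over a field $\mathbb{F}$ is a linear code in $\mathbb{F}^n$ of dimension $k$ and minimum Hamming distance $n-k+1$. PMDS codes: let $\ell,m,r_1,\dots,r_m$ be positive integers, $n=\sum_{i=1}^m(r_i+\ell)$, and $C\subseteq\mathbb{F}^n$ a linear code of dimension $k<n$ with generator matrix $G=(B_1\mid\dots\mid B_m)$, $B_i\in\mathbb{F}^{k\times(r_i+\ell)}$. Then $C$ is an $[n,k,\ell;r_1,\dots,r_m]$-PMDS code if (i) for each $i$ the row space of $B_i$ is an $[r_i+\ell,\ell]$-MDS code, and (ii) for any choice of $r_i$ erased coordinates in the $i$-th block for every $i$, the code obtained from $C$ by puncturing these coordinates is an $[m\ell,k]$-MDS code. *)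

theory Defs
  imports Main "HOL.Vector_Spaces" "HOL-Library.Function_Algebras"
begin

text \<open>Words of a code are functions nat => F; a code on the coordinate set I
  consists of words vanishing outside I.  The vector space structure is the
  coordinatewise one.\<close>

definition fscale :: "'a::field \<Rightarrow> (nat \<Rightarrow> 'a) \<Rightarrow> (nat \<Rightarrow> 'a)" where
  "fscale c v = (\<lambda>j. c * v j)"

definition zero_word :: "nat \<Rightarrow> 'a::field" where
  "zero_word = (\<lambda>_. 0)"

definition linear_code :: "nat set \<Rightarrow> (nat \<Rightarrow> 'a::field) set \<Rightarrow> bool" where
  "linear_code I C \<longleftrightarrow> finite I \<and> module.subspace fscale C \<and> (\<forall>v\<in>C. \<forall>j. j \<notin> I \<longrightarrow> v j = 0)"

definition code_dim :: "(nat \<Rightarrow> 'a::field) set \<Rightarrow> nat" where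
  "code_dim C = vector_space.dim fscale C"

definition hweight :: "nat set \<Rightarrow> (nat \<Rightarrow> 'a::field) \<Rightarrow> nat" where
  "hweight I v = card {j\<in>I. v j \<noteq> 0}"

text \<open>Minimum Hamming distance = minimum weight of a nonzero codeword (linear code).\<close>
definition min_dist :: "nat set \<Rightarrow> (nat \<Rightarrow> 'a::field) set \<Rightarrow> nat" where
  "min_dist I C = Min (hweight I ` (C - {zero_word}))"

definition mds_code :: "nat set \<Rightarrow> nat \<Rightarrow> (nat \<Rightarrow> 'a::field) set \<Rightarrow> bool" where
  "mds_code I k C \<longleftrightarrow> linear_code I C \<and> code_dim C = k \<and> C - {zero_word} \<noteq> {}
      \<and> min_dist I C = card I - k + 1"

definition puncture :: "nat set \<Rightarrow> (nat \<Rightarrow> 'a::field) set \<Rightarrow> (nat \<Rightarrow> 'a) set" where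
  "puncture J C = (\<lambda>v. (\<lambda>j. if j \<in> J then v j else 0)) ` C"

text \<open>Blocks: block i (0-based, i < m) has length l + r i, coordinates 0..<n.\<close>
definition blk_start :: "nat \<Rightarrow> (nat \<Rightarrow> nat) \<Rightarrow> nat \<Rightarrow> nat" where
  "blk_start l r i = (\<Sum>t<i. r t + l)"

definition blk :: "nat \<Rightarrow> (nat \<Rightarrow> nat) \<Rightarrow> nat \<Rightarrow> nat set" where
  "blk l r i = {blk_start l r i ..< blk_start l r i + (r i + l)}"

text \<open>[n,k,l; r_0,...,r_{m-1}]-PMDS code.  The row space of the block B_i of a
  generator matrix is exactly the code punctured to block i.\<close>
definition is_pmds :: "nat \<Rightarrow> nat \<Rightarrow> nat \<Rightarrow> nat \<Rightarrow> (nat \<Rightarrow> nat) \<Rightarrow> (nat \<Rightarrow> 'a::field) set \<Rightarrow> bool" where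
  "is_pmds n k l m r C \<longleftrightarrow>
     n = (\<Sum>i<m. r i + l) \<and> k < n \<and>
     linear_code {0..<n} C \<and> code_dim C = k \<and>
     (\<forall>i<m. mds_code (blk l r i) l (puncture (blk l r i) C)) \<and>
     (\<forall>E :: nat \<Rightarrow> nat set. (\<forall>i<m. E i \<subseteq> blk l r i \<and> card (E i) = r i) \<longrightarrow>
        mds_code ({0..<n} - (\<Union>i<m. E i)) k (puncture ({0..<n} - (\<Union>i<m. E i)) C))"

end

theory Submission
  imports Defs "HOL-Library.FuncSet" "HOL-Computational_Algebra.Polynomial"
begin

text \<open>The generator column at a coordinate j of block i is F_i v_j, where
  v_j = (1, w_j, ..., w_j^(l-1)) for distinct nonzero w_j and F_i is a k x l matrix.  Punctured to
  block i the code is then the Reed-Solomon code of the Vandermonde columns v_j as soon as F_i has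
  rank l, and the global condition holds as soon as every set of at most k generator columns
  meeting each block in at most l positions is linearly independent.  The F_i are chosen one
  column at a time, keeping this independence for the columns chosen so far: a new column f can
  only create a dependency if f = - sum_(j in T) c_j g_j, where g_j are the current generator
  columns, T is a set of at most k coordinates and c is normalised by one linear condition;
  there are at most sum_j (n choose j) q^(j-1) < q^k such f, where q = |F|.  The bound on q
  gives this inequality, and also q > n, so that the w_j exist.\<close>

interpretation words: vector_space "fscale :: 'a::field \<Rightarrow> (nat \<Rightarrow> 'a) \<Rightarrow> (nat \<Rightarrow> 'a)"
  by unfold_locales (auto simp: fscale_def fun_eq_iff algebra_simps)

lemma zero_word_eq: "zero_word = 0"
  by (simp add: zero_word_def fun_eq_iff)

lemma sum_fun_apply: "(\<Sum>v\<in>A. (f v :: nat \<Rightarrow> 'a::comm_monoid_add)) x = (\<Sum>v\<in>A. f v x)"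
  by (induction A rule: infinite_finite_induct) auto

lemma card_field_ge_2: "2 \<le> card (UNIV :: 'a::{finite,field} set)"
proof -
  have "card {0::'a, 1} \<le> card (UNIV :: 'a set)" by (intro card_mono) auto
  then show ?thesis by simp
qed

definition vecs :: "nat \<Rightarrow> (nat \<Rightarrow> 'a::field) set" where
  "vecs d = {x. \<forall>t\<ge>d. x t = 0}"

lemma vecs_diff: "x \<in> vecs d \<Longrightarrow> y \<in> vecs d \<Longrightarrow> x - y \<in> vecs d"
  by (simp add: vecs_def)

lemma vecs_add: "x \<in> vecs d \<Longrightarrow> y \<in> vecs d \<Longrightarrow> x + y \<in> vecs d"
  by (simp add: vecs_def)

lemma vecs_scale: "x \<in> vecs d \<Longrightarrow> fscale c x \<in> vecs d"
  by (simp add: vecs_def fscale_def)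

lemma bij_betw_vecs_PiE:
  "bij_betw (\<lambda>x. restrict x {..<d}) (vecs d :: (nat \<Rightarrow> 'a::field) set) (PiE {..<d} (\<lambda>_. UNIV))"
proof (rule bij_betw_imageI)
  show "inj_on (\<lambda>x. restrict x {..<d}) (vecs d :: (nat \<Rightarrow> 'a) set)"
    by (auto simp: inj_on_def vecs_def fun_eq_iff restrict_def) (metis not_le)
  show "(\<lambda>x. restrict x {..<d}) ` (vecs d :: (nat \<Rightarrow> 'a) set) = PiE {..<d} (\<lambda>_. UNIV)"
  proof safe
    fix f :: "nat \<Rightarrow> 'a" assume "f \<in> PiE {..<d} (\<lambda>_. UNIV)"
    then show "f \<in> (\<lambda>x. restrict x {..<d}) ` vecs d"
      by (intro image_eqI[of _ _ "\<lambda>t. if t < d then f t else 0"])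
         (auto simp: vecs_def restrict_def fun_eq_iff PiE_def extensional_def)
  qed (auto split: if_split_asm)
qed

lemma finite_vecs: "finite (vecs d :: (nat \<Rightarrow> 'a::{finite,field}) set)"
proof -
  have "finite (PiE {..<d} (\<lambda>_. UNIV :: 'a set))" by (simp add: finite_PiE)
  then show ?thesis using bij_betw_finite[OF bij_betw_vecs_PiE[of d]] by blast
qed

lemma card_vecs: "card (vecs d :: (nat \<Rightarrow> 'a::{finite,field}) set) = card (UNIV :: 'a set) ^ d"
  using bij_betw_same_card[OF bij_betw_vecs_PiE[of d]] by (simp add: card_PiE)

lemma card_span_independent:
  fixes B :: "(nat \<Rightarrow> 'a::{finite,field}) set"
  assumes "finite B" "words.independent B"
  shows "card (words.span B) = card (UNIV :: 'a set) ^ card B"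
proof -
  let ?f = "\<lambda>u. \<Sum>v\<in>B. fscale (u v) v"
  have "words.span B = range ?f" using words.span_finite[OF assms(1)] .
  also have "\<dots> = ?f ` PiE B (\<lambda>_. UNIV)"
  proof safe
    fix u show "?f u \<in> ?f ` PiE B (\<lambda>_. UNIV)"
      by (intro image_eqI[of _ _ "restrict u B"]) (auto intro!: sum.cong simp: restrict_def)
  qed auto
  finally have span: "words.span B = ?f ` PiE B (\<lambda>_. UNIV)" .
  have "inj_on ?f (PiE B (\<lambda>_. UNIV))"
  proof (rule inj_onI)
    fix u v assume u: "u \<in> PiE B (\<lambda>_. UNIV)" and v: "v \<in> PiE B (\<lambda>_. UNIV)" and "?f u = ?f v"
    moreover have "(\<Sum>b\<in>B. fscale (u b - v b) b) = ?f u - ?f v"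
      by (simp add: sum_fun_apply fun_eq_iff sum_subtractf[symmetric] fscale_def algebra_simps)
    ultimately have "(\<Sum>b\<in>B. fscale (u b - v b) b) = 0" by simp
    then have "\<forall>b\<in>B. u b - v b = 0"
      using words.independentD[OF assms(2) assms(1) subset_refl] by fastforce
    then show "u = v" using u v by (auto simp: PiE_def extensional_def fun_eq_iff)
  qed
  then show ?thesis unfolding span using assms(1) by (simp add: card_image card_PiE)
qed

lemma code_dim_eq_if_card:
  fixes C :: "(nat \<Rightarrow> 'a::{finite,field}) set"
  assumes "words.subspace C" "finite C" "card C = card (UNIV :: 'a set) ^ d"
  shows "code_dim C = d"
proof -
  obtain B where B: "B \<subseteq> C" "words.independent B" "C \<subseteq> words.span B" "card B = words.dim C"
    using words.basis_exists by blast
  have "finite B" using B(1) assms(2) finite_subset by blast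
  moreover have "C = words.span B" using words.span_minimal[OF B(1) assms(1)] B(3) by blast
  ultimately have "card (UNIV :: 'a set) ^ card B = card (UNIV :: 'a set) ^ d"
    using card_span_independent[OF _ B(2)] assms(3) by simp
  then have "card B = d" using card_field_ge_2[where 'a='a] by simp
  then show ?thesis using B(4) by (simp add: code_dim_def)
qed

definition dot :: "nat \<Rightarrow> (nat \<Rightarrow> 'a::field) \<Rightarrow> (nat \<Rightarrow> 'a) \<Rightarrow> 'a" where
  "dot d x y = (\<Sum>t<d. x t * y t)"

definition lincomb :: "(nat \<Rightarrow> nat \<Rightarrow> 'a::field) \<Rightarrow> nat set \<Rightarrow> (nat \<Rightarrow> 'a) \<Rightarrow> nat \<Rightarrow> 'a" where
  "lincomb h S c = (\<lambda>t. \<Sum>j\<in>S. c j * h j t)"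

definition lin_indep :: "(nat \<Rightarrow> nat \<Rightarrow> 'a::field) \<Rightarrow> nat set \<Rightarrow> bool" where
  "lin_indep h S \<longleftrightarrow> (\<forall>c. lincomb h S c = (\<lambda>_. 0) \<longrightarrow> (\<forall>j\<in>S. c j = 0))"

definition full_rank :: "nat \<Rightarrow> (nat \<Rightarrow> nat \<Rightarrow> 'a::field) \<Rightarrow> nat set \<Rightarrow> bool" where
  "full_rank d h S \<longleftrightarrow> (\<forall>y\<in>vecs d. (\<forall>j\<in>S. dot d y (h j) = 0) \<longrightarrow> y = 0)"

lemma dot_diff: "dot d (x - y) z = dot d x z - dot d y z"
  by (simp add: dot_def sum_subtractf[symmetric] algebra_simps)

lemma dot_add: "dot d (x + y) z = dot d x z + dot d y z"
  by (simp add: dot_def sum.distrib[symmetric] algebra_simps)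

lemma dot_scale: "dot d (fscale c x) z = c * dot d x z"
  by (simp add: dot_def fscale_def sum_distrib_left algebra_simps)

lemma dot_lincomb: "dot d y (lincomb h S c) = (\<Sum>j\<in>S. c j * dot d y (h j))"
  unfolding dot_def lincomb_def
  by (simp add: sum_distrib_left sum_distrib_right sum.swap[of _ "{..<d}"] algebra_simps)

lemma lincomb_vecs: "(\<And>j. j \<in> S \<Longrightarrow> h j \<in> vecs d) \<Longrightarrow> lincomb h S c \<in> vecs d"
  by (simp add: vecs_def lincomb_def)

lemma lincomb_split:
  "finite S \<Longrightarrow> A \<subseteq> S \<Longrightarrow> lincomb h S c t = lincomb h A c t + lincomb h (S - A) c t"
  unfolding lincomb_def by (simp add: sum.subset_diff add.commute)

lemma lincomb_replace:
  assumes "finite T" "A \<subseteq> T" "A' \<subseteq> A" "lincomb h A' d = lincomb h A c"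
  shows "lincomb h ((T - A) \<union> A') (\<lambda>j. if j \<in> A' then d j else c j) = lincomb h T c"
proof (rule ext)
  fix t
  let ?c = "\<lambda>j. if j \<in> A' then d j else c j"
  have "finite A'" using assms(2,3) by (intro finite_subset[OF _ assms(1)]) blast
  then have "lincomb h ((T - A) \<union> A') ?c t = lincomb h (T - A) ?c t + lincomb h A' ?c t"
    unfolding lincomb_def using assms(1,3) by (intro sum.union_disjoint) auto
  also have "lincomb h (T - A) ?c t = lincomb h (T - A) c t"
    unfolding lincomb_def using assms(3) by (intro sum.cong) auto
  also have "lincomb h A' ?c t = lincomb h A' d t"
    unfolding lincomb_def by (intro sum.cong) auto
  also have "\<dots> = lincomb h A c t" using assms(4) by simp
  also have "lincomb h (T - A) c t + lincomb h A c t = lincomb h T c t"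
    using lincomb_split[OF assms(1,2), of h c t] by simp
  finally show "lincomb h ((T - A) \<union> A') ?c t = lincomb h T c t" .
qed

lemma sum_mult_sum_swap:
  "(\<Sum>j\<in>A. a j * (\<Sum>t<u. b j t * X t)) = (\<Sum>t<u. (\<Sum>j\<in>A. a j * b j t) * X t)"
  for a :: "nat \<Rightarrow> 'a::comm_ring_1"
proof -
  have "(\<Sum>j\<in>A. a j * (\<Sum>t<u. b j t * X t)) = (\<Sum>j\<in>A. \<Sum>t<u. a j * (b j t * X t))"
    by (simp add: sum_distrib_left)
  also have "\<dots> = (\<Sum>t<u. \<Sum>j\<in>A. a j * (b j t * X t))" by (rule sum.swap)
  also have "\<dots> = (\<Sum>t<u. (\<Sum>j\<in>A. a j * b j t) * X t)"
    by (simp add: sum_distrib_right mult.assoc)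
  finally show ?thesis .
qed

lemma lin_indep_spans_vecs:
  fixes h :: "nat \<Rightarrow> nat \<Rightarrow> 'a::{finite,field}"
  assumes h: "\<And>j. j \<in> S \<Longrightarrow> h j \<in> vecs d" and S: "finite S" "card S = d" "lin_indep h S"
    and z: "z \<in> vecs d"
  shows "\<exists>c. z = lincomb h S c"
proof -
  have "inj_on (lincomb h S) (PiE S (\<lambda>_. UNIV))"
  proof (rule inj_onI)
    fix u v assume u: "u \<in> PiE S (\<lambda>_. UNIV)" and v: "v \<in> PiE S (\<lambda>_. UNIV)"
      and "lincomb h S u = lincomb h S v"
    then have "lincomb h S (u - v) = (\<lambda>_. 0)"
      by (simp add: lincomb_def fun_eq_iff sum_subtractf left_diff_distrib)
    then have "\<forall>j\<in>S. (u - v) j = 0" using S(3) unfolding lin_indep_def by blast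
    then show "u = v" using u v by (auto simp: PiE_def extensional_def fun_eq_iff)
  qed
  then have "card (lincomb h S ` PiE S (\<lambda>_. UNIV)) = card (vecs d :: (nat \<Rightarrow> 'a) set)"
    using S by (simp add: card_image card_PiE card_vecs)
  moreover have "lincomb h S ` PiE S (\<lambda>_. UNIV) \<subseteq> vecs d" using lincomb_vecs h by blast
  ultimately have "lincomb h S ` PiE S (\<lambda>_. UNIV) = vecs d"
    using card_subset_eq[OF finite_vecs] by blast
  then show ?thesis using z by blast
qed

lemma lin_indep_imp_full_rank:
  fixes h :: "nat \<Rightarrow> nat \<Rightarrow> 'a::{finite,field}"
  assumes h: "\<And>j. j \<in> S \<Longrightarrow> h j \<in> vecs d" and S: "finite S" "card S = d" "lin_indep h S"
  shows "full_rank d h S"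
  unfolding full_rank_def
proof (intro ballI impI ext)
  fix y t assume y: "y \<in> vecs d" and orth: "\<forall>j\<in>S. dot d y (h j) = 0"
  show "y t = 0 t"
  proof (cases "t < d")
    case True
    define e where "e = (\<lambda>s. if s = t then 1 else (0::'a))"
    have "e \<in> vecs d" using True by (simp add: e_def vecs_def)
    then obtain c where "e = lincomb h S c" using lin_indep_spans_vecs[OF h S] by blast
    then have "dot d y e = 0" using orth by (simp add: dot_lincomb)
    moreover have "dot d y e = y t"
      using True by (simp add: dot_def e_def if_distrib[of "\<lambda>z. _ * z"] sum.delta cong: if_cong)
    ultimately show ?thesis by simp
  qed (use y in \<open>simp add: vecs_def\<close>)
qed

lemma full_rank_dot_eqD:
  assumes "full_rank d h S" "x \<in> vecs d" "y \<in> vecs d" "\<forall>j\<in>S. dot d x (h j) = dot d y (h j)"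
  shows "x = y"
proof -
  have "\<forall>j\<in>S. dot d (x - y) (h j) = 0" using assms(4) by (simp add: dot_diff)
  then have "x - y = 0" using assms(1) vecs_diff[OF assms(2,3)] unfolding full_rank_def by blast
  then show ?thesis by simp
qed

lemma exists_nonzero_orthogonal:
  fixes h :: "nat \<Rightarrow> nat \<Rightarrow> 'a::{finite,field}"
  assumes S: "finite S" "card S < d"
  shows "\<exists>y\<in>vecs d. y \<noteq> 0 \<and> (\<forall>j\<in>S. dot d y (h j) = 0)"
proof -
  define \<phi> where "\<phi> = (\<lambda>y::nat \<Rightarrow> 'a. restrict (\<lambda>j. dot d y (h j)) S)"
  have "card (\<phi> ` vecs d) \<le> card (PiE S (\<lambda>_. UNIV :: 'a set))"
    by (rule card_mono) (auto simp: finite_PiE S \<phi>_def)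
  also have "\<dots> = card (UNIV :: 'a set) ^ card S" using S by (simp add: card_PiE)
  also have "\<dots> < card (UNIV :: 'a set) ^ d"
    using card_field_ge_2[where 'a='a] S by (intro power_strict_increasing) auto
  finally have "card (\<phi> ` vecs d) < card (vecs d :: (nat \<Rightarrow> 'a) set)" by (simp add: card_vecs)
  then have "\<not> inj_on \<phi> (vecs d)" using card_image by fastforce
  then obtain y1 y2 where y: "y1 \<in> vecs d" "y2 \<in> vecs d" "y1 \<noteq> y2" "\<phi> y1 = \<phi> y2"
    unfolding inj_on_def by blast
  have "\<forall>j\<in>S. dot d (y1 - y2) (h j) = 0"
  proof
    fix j assume "j \<in> S"
    then show "dot d (y1 - y2) (h j) = 0" using fun_cong[OF y(4), of j] by (simp add: \<phi>_def dot_diff)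
  qed
  then show ?thesis using y vecs_diff by (intro bexI[of _ "y1 - y2"]) auto
qed

lemma full_rank_dot_surj:
  fixes h :: "nat \<Rightarrow> nat \<Rightarrow> 'a::{finite,field}"
  assumes S: "finite S" "card S = d" and rk: "full_rank d h S"
  shows "\<exists>x\<in>vecs d. \<forall>j\<in>S. dot d x (h j) = \<beta> j"
proof -
  define \<phi> where "\<phi> = (\<lambda>x::nat \<Rightarrow> 'a. restrict (\<lambda>j. dot d x (h j)) S)"
  have "inj_on \<phi> (vecs d)"
  proof (rule inj_onI)
    fix x y assume "x \<in> vecs d" "y \<in> vecs d" "\<phi> x = \<phi> y"
    moreover have "\<forall>j\<in>S. dot d x (h j) = dot d y (h j)"
      using \<open>\<phi> x = \<phi> y\<close> unfolding \<phi>_def by (metis restrict_apply)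
    ultimately show "x = y" using full_rank_dot_eqD[OF rk] by blast
  qed
  then have "card (\<phi> ` vecs d) = card (PiE S (\<lambda>_. UNIV :: 'a set))"
    using S by (simp add: card_image card_vecs card_PiE)
  moreover have "\<phi> ` vecs d \<subseteq> PiE S (\<lambda>_. UNIV)" by (auto simp: \<phi>_def)
  moreover have "finite (PiE S (\<lambda>_. UNIV :: 'a set))" using S(1) by (simp add: finite_PiE)
  ultimately have "\<phi> ` vecs d = PiE S (\<lambda>_. UNIV)" by (simp add: card_subset_eq)
  moreover have "restrict \<beta> S \<in> PiE S (\<lambda>_. UNIV)" by simp
  ultimately obtain x where "x \<in> vecs d" "\<phi> x = restrict \<beta> S" by (metis imageE)
  moreover have "\<forall>j\<in>S. dot d x (h j) = \<beta> j"
    using calculation(2) unfolding \<phi>_def by (metis restrict_apply)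
  ultimately show ?thesis by blast
qed

section \<open>Codes given by generator columns\<close>

text \<open>\<open>code_of I h d\<close> is the code on the coordinates \<open>I\<close> whose generator matrix has the
  column \<open>h j \<in> F\<^sup>d\<close> at coordinate \<open>j\<close>; \<open>encode I h d x\<close> is the codeword of the message \<open>x\<close>.\<close>

definition encode :: "nat set \<Rightarrow> (nat \<Rightarrow> nat \<Rightarrow> 'a::field) \<Rightarrow> nat \<Rightarrow> (nat \<Rightarrow> 'a) \<Rightarrow> nat \<Rightarrow> 'a" where
  "encode I h d x = (\<lambda>j. if j \<in> I then dot d x (h j) else 0)"

definition code_of :: "nat set \<Rightarrow> (nat \<Rightarrow> nat \<Rightarrow> 'a::field) \<Rightarrow> nat \<Rightarrow> (nat \<Rightarrow> 'a) set" where
  "code_of I h d = encode I h d ` vecs d"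

lemma encode_add: "encode I h d (x + y) = encode I h d x + encode I h d y"
  by (simp add: encode_def fun_eq_iff dot_add)

lemma encode_scale: "encode I h d (fscale c x) = fscale c (encode I h d x)"
  by (simp add: encode_def fun_eq_iff dot_scale[unfolded fscale_def] fscale_def)

lemma encode_zero: "encode I h d 0 = 0"
  by (simp add: encode_def fun_eq_iff dot_def)

lemma linear_code_code_of: "finite I \<Longrightarrow> linear_code I (code_of I h d)"
  unfolding linear_code_def
proof (intro conjI)
  show "words.subspace (code_of I h d)"
    unfolding words.subspace_def code_of_def
  proof (intro conjI ballI allI)
    show "0 \<in> encode I h d ` vecs d"
      using encode_zero[of I h d] by (force simp: vecs_def)
    fix x y assume "x \<in> encode I h d ` vecs d" "y \<in> encode I h d ` vecs d"
    then show "x + y \<in> encode I h d ` vecs d"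
      by (auto simp flip: encode_add intro: vecs_add)
  next
    fix c x assume "x \<in> encode I h d ` vecs d"
    then show "fscale c x \<in> encode I h d ` vecs d"
      by (auto simp flip: encode_scale intro: vecs_scale)
  qed
qed (auto simp: code_of_def encode_def)

lemma finite_code_of: "finite (code_of I h d :: (nat \<Rightarrow> 'a::{finite,field}) set)"
  by (simp add: code_of_def finite_vecs)

lemma inj_on_encode:
  assumes "S \<subseteq> I" "full_rank d h S"
  shows "inj_on (encode I h d) (vecs d)"
proof (rule inj_onI)
  fix x y assume x: "x \<in> vecs d" and y: "y \<in> vecs d" and eq: "encode I h d x = encode I h d y"
  have "\<forall>j\<in>S. dot d x (h j) = dot d y (h j)"
  proof
    fix j assume "j \<in> S"
    then show "dot d x (h j) = dot d y (h j)"
      using fun_cong[OF eq, of j] assms(1) by (auto simp: encode_def)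
  qed
  then show "x = y" using full_rank_dot_eqD[OF assms(2) x y] by blast
qed

lemma code_dim_code_of:
  fixes h :: "nat \<Rightarrow> nat \<Rightarrow> 'a::{finite,field}"
  assumes "finite I" "S \<subseteq> I" "full_rank d h S"
  shows "code_dim (code_of I h d) = d"
proof (rule code_dim_eq_if_card)
  show "words.subspace (code_of I h d)"
    using linear_code_code_of[OF assms(1)] unfolding linear_code_def by blast
  show "card (code_of I h d) = card (UNIV :: 'a set) ^ d"
    unfolding code_of_def by (simp add: card_image[OF inj_on_encode[OF assms(2,3)]] card_vecs)
qed (rule finite_code_of)

lemma puncture_code_of: "J \<subseteq> I \<Longrightarrow> puncture J (code_of I h d) = code_of J h d"
  unfolding puncture_def code_of_def image_image
  by (intro image_cong refl) (auto simp: encode_def fun_eq_iff)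

lemma code_of_factor:
  assumes "\<And>x j. x \<in> vecs k \<Longrightarrow> j \<in> I \<Longrightarrow> dot k x (G j) = dot l (\<phi> x) (V j)"
    and "\<phi> ` vecs k = vecs l"
  shows "code_of I G k = code_of I V l"
proof -
  have "code_of I G k = encode I V l ` \<phi> ` vecs k"
    unfolding code_of_def image_image using assms(1) by (intro image_cong refl) (auto simp: encode_def)
  then show ?thesis using assms(2) by (simp add: code_of_def)
qed

lemma hweight_eq: "finite I \<Longrightarrow> hweight I v = card I - card {j\<in>I. v j = 0}"
proof -
  assume "finite I"
  moreover have "{j\<in>I. v j \<noteq> 0} = I - {j\<in>I. v j = 0}" by auto
  ultimately show ?thesis unfolding hweight_def by (simp add: card_Diff_subset)
qed

context
  fixes I :: "nat set" and h :: "nat \<Rightarrow> nat \<Rightarrow> 'a::{finite,field}" and d :: nat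
  assumes rank: "\<And>S. S \<subseteq> I \<Longrightarrow> card S = d \<Longrightarrow> full_rank d h S"
    and fin: "finite I" and d_le: "d \<le> card I"
begin

lemma hweight_encode_ge:
  assumes x: "x \<in> vecs d" and nz: "encode I h d x \<noteq> 0"
  shows "card I - d + 1 \<le> hweight I (encode I h d x)"
proof -
  let ?Z = "{j\<in>I. encode I h d x j = 0}"
  have "card ?Z < d"
  proof (rule ccontr)
    assume "\<not> card ?Z < d"
    then obtain S where S: "S \<subseteq> ?Z" "card S = d" by (meson not_less obtain_subset_with_card_n)
    then have "\<forall>j\<in>S. dot d x (h j) = dot d 0 (h j)" by (auto simp: encode_def dot_def)
    then have "x = 0"
      using full_rank_dot_eqD[OF rank x, of S 0] S by (auto simp: vecs_def)
    then show False using nz encode_zero[of I h d] by simp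
  qed
  then show ?thesis using hweight_eq[OF fin, of "encode I h d x"] d_le by linarith
qed

lemma exists_encode_hweight_eq:
  assumes "1 \<le> d"
  shows "\<exists>x\<in>vecs d. encode I h d x \<noteq> 0 \<and> hweight I (encode I h d x) = card I - d + 1"
proof -
  obtain S0 where S0: "S0 \<subseteq> I" "card S0 = d" using obtain_subset_with_card_n[OF d_le] by blast
  have "d - 1 \<le> card I" using d_le by simp
  then obtain S1 where S1: "S1 \<subseteq> I" "card S1 = d - 1" "finite S1"
    by (rule obtain_subset_with_card_n)
  obtain x where x: "x \<in> vecs d" "x \<noteq> 0" "\<forall>j\<in>S1. dot d x (h j) = 0"
    using exists_nonzero_orthogonal[OF S1(3), of d h] S1(2) assms(1) by auto
  have "encode I h d x \<noteq> encode I h d 0"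
    using inj_on_encode[OF S0(1) rank[OF S0]] x by (auto simp: inj_on_def vecs_def)
  then have nz: "encode I h d x \<noteq> 0" by (simp add: encode_zero)
  have "S1 \<subseteq> {j\<in>I. encode I h d x j = 0}" using S1 x(3) by (auto simp: encode_def)
  then have "d - 1 \<le> card {j\<in>I. encode I h d x j = 0}"
    using S1(2) card_mono[of "{j\<in>I. encode I h d x j = 0}" S1] fin by auto
  then have "hweight I (encode I h d x) \<le> card I - d + 1"
    using hweight_eq[OF fin, of "encode I h d x"] d_le by linarith
  then show ?thesis using hweight_encode_ge[OF x(1) nz] x(1) nz by (intro bexI[of _ x]) auto
qed

lemma mds_code_of:
  assumes "1 \<le> d"
  shows "mds_code I d (code_of I h d)"
proof -
  obtain S where S: "S \<subseteq> I" "card S = d" using obtain_subset_with_card_n[OF d_le] by blast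
  obtain x where x: "x \<in> vecs d" "encode I h d x \<noteq> 0" "hweight I (encode I h d x) = card I - d + 1"
    using exists_encode_hweight_eq[OF assms] by blast
  have "min_dist I (code_of I h d) = card I - d + 1"
    unfolding min_dist_def
  proof (rule Min_eqI)
    show "finite (hweight I ` (code_of I h d - {zero_word}))"
      by (intro finite_imageI finite_Diff finite_code_of)
    show "card I - d + 1 \<in> hweight I ` (code_of I h d - {zero_word})"
      using x by (force simp: code_of_def zero_word_eq)
    fix v assume "v \<in> hweight I ` (code_of I h d - {zero_word})"
    then obtain y where "y \<in> vecs d" "encode I h d y \<noteq> 0" "v = hweight I (encode I h d y)"
      by (auto simp: code_of_def zero_word_eq)
    then show "card I - d + 1 \<le> v" using hweight_encode_ge by blast
  qed
  moreover have "encode I h d x \<in> code_of I h d - {zero_word}"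
    using x by (auto simp: code_of_def zero_word_eq)
  ultimately show ?thesis
    unfolding mds_code_def using linear_code_code_of[OF fin] code_dim_code_of[OF fin S(1) rank[OF S]]
    by blast
qed

end

section \<open>Vandermonde columns\<close>

lemma vandermonde_coeffs_zero:
  fixes z :: "nat \<Rightarrow> 'a::field"
  assumes fS: "finite S" and inj: "inj_on z S" and cu: "card S \<le> u"
    and e: "\<forall>t<u. (\<Sum>j\<in>S. c j * z j ^ t) = 0"
  shows "\<forall>j\<in>S. c j = 0"
proof
  fix j0 assume j0: "j0 \<in> S"
  define p where "p = (\<Prod>j\<in>S - {j0}. [:- z j, 1:])"
  have "degree p \<le> sum (degree \<circ> (\<lambda>j. [:- z j, 1:])) (S - {j0})"
    unfolding p_def using fS by (intro degree_prod_sum_le) auto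
  also have "\<dots> = card (S - {j0})" by simp
  also have "\<dots> < u" using cu j0 fS card_Diff1_less[of S j0] by linarith
  finally have dp: "degree p < u" .
  have "(\<Sum>j\<in>S. c j * poly p (z j)) = (\<Sum>j\<in>S. \<Sum>i\<le>degree p. coeff p i * (c j * z j ^ i))"
    by (simp add: poly_altdef sum_distrib_left algebra_simps)
  also have "\<dots> = (\<Sum>i\<le>degree p. coeff p i * (\<Sum>j\<in>S. c j * z j ^ i))"
    by (subst sum.swap) (simp add: sum_distrib_left)
  also have "\<dots> = 0" using e dp by (intro sum.neutral) auto
  finally have "(\<Sum>j\<in>S. c j * poly p (z j)) = 0" .
  moreover have "poly p (z j) = 0" if "j \<in> S - {j0}" for j
    unfolding p_def poly_prod using that fS by (intro prod_zero) auto
  ultimately have "c j0 * poly p (z j0) = 0"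
    using sum.remove[OF fS j0, of "\<lambda>j. c j * poly p (z j)"] by simp
  moreover have "poly p (z j0) \<noteq> 0"
    unfolding p_def poly_prod using fS inj j0 by (subst prod_zero_iff) (auto simp: inj_on_def)
  ultimately show "c j0 = 0" by simp
qed

definition powers :: "nat \<Rightarrow> (nat \<Rightarrow> 'a::field) \<Rightarrow> nat \<Rightarrow> nat \<Rightarrow> 'a" where
  "powers u z j = (\<lambda>t. if t < u then z j ^ t else 0)"

lemma powers_vecs: "powers u z j \<in> vecs u"
  by (simp add: powers_def vecs_def)

lemma lincomb_powers: "t < u \<Longrightarrow> lincomb (powers u z) S c t = (\<Sum>j\<in>S. c j * z j ^ t)"
  by (simp add: lincomb_def powers_def)

lemma lin_indep_powers:
  assumes "finite S" "inj_on z S" "card S \<le> u"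
  shows "lin_indep (powers u z) S"
  unfolding lin_indep_def
proof (intro allI impI)
  fix c assume "lincomb (powers u z) S c = (\<lambda>_. 0)"
  then have "\<forall>t<u. (\<Sum>j\<in>S. c j * z j ^ t) = 0" by (metis lincomb_powers)
  then show "\<forall>j\<in>S. c j = 0" using vandermonde_coeffs_zero[OF assms] by blast
qed

lemma full_rank_powers:
  fixes z :: "nat \<Rightarrow> 'a::{finite,field}"
  assumes "finite S" "inj_on z S" "card S = u"
  shows "full_rank u (powers u z) S"
  using lin_indep_imp_full_rank[OF powers_vecs assms(1,3) lin_indep_powers] assms by simp

lemma exists_moments:
  fixes z :: "nat \<Rightarrow> 'a::{finite,field}"
  assumes "finite S" "inj_on z S" "card S = u" "v \<in> vecs u"
  shows "\<exists>c. \<forall>t<u. v t = (\<Sum>j\<in>S. c j * z j ^ t)"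
proof -
  obtain c where "v = lincomb (powers u z) S c"
    using lin_indep_spans_vecs[OF powers_vecs assms(1,3) lin_indep_powers] assms by auto
  then show ?thesis using lincomb_powers by metis
qed

lemma exists_inj_nonzero:
  assumes "n < card (UNIV :: 'a::{finite,field} set)"
  shows "\<exists>w :: nat \<Rightarrow> 'a. inj_on w {0..<n} \<and> (\<forall>j<n. w j \<noteq> 0)"
proof -
  have "card {0..<n} \<le> card (UNIV - {0 :: 'a})" using assms by (simp add: card_Diff_subset)
  then obtain w :: "nat \<Rightarrow> 'a" where w: "w ` {0..<n} \<subseteq> UNIV - {0}" "inj_on w {0..<n}"
    using card_le_inj[of "{0..<n}" "UNIV - {0::'a}"] by auto
  then have "\<forall>j<n. w j \<noteq> 0" by (auto simp: image_subset_iff)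
  then show ?thesis using w(2) by blast
qed

section \<open>The counting inequality\<close>

lemma binomial_Suc_mult: "(N choose Suc K) * Suc K = (N choose K) * (N - K)"
  using binomial_absorption[of K N] binomial_absorb_comp[of N K] by (simp add: mult.commute)

lemma le_mult_binomial:
  assumes "1 \<le> k" "k < n"
  shows "k \<le> (n - k) * ((n - 1) choose (k - 1))"
proof -
  have "((n - 1) choose k) * k = ((n - 1) choose (k - 1)) * (n - k)"
    using binomial_Suc_mult[of "n - 1" "k - 1"] assms by (simp add: Suc_diff_le)
  moreover have "1 \<le> (n - 1) choose k" using assms by (simp add: Suc_leI zero_less_binomial)
  then have "k \<le> ((n - 1) choose k) * k" by simp
  ultimately show ?thesis by (simp add: mult.commute)
qed

lemma sum_binomial_powers_le:
  fixes q n k :: nat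
  assumes q: "2 * k \<le> q"
  shows "1 \<le> K \<Longrightarrow> K \<le> k \<Longrightarrow> K \<le> n \<Longrightarrow>
    (\<Sum>j=1..K. (n choose j) * q ^ (j - 1)) \<le> 2 * (n choose K) * q ^ (K - 1)"
proof (induction K)
  case 0 then show ?case by simp
next
  case (Suc K)
  show ?case
  proof (cases "K = 0")
    case True then show ?thesis by simp
  next
    case False
    have "2 * Suc K \<le> 2 * k" using Suc.prems by simp
    then have "2 * Suc K \<le> q" using q by linarith
    moreover have "1 \<le> n - K" using Suc.prems by simp
    ultimately have "2 * Suc K \<le> (n - K) * q" by (metis dual_order.trans mult_1 mult_le_mono1)
    then have "(n choose K) * (2 * Suc K) \<le> (n choose K) * ((n - K) * q)" by (rule mult_le_mono2)
    also have "\<dots> = ((n choose Suc K) * Suc K) * q" using binomial_Suc_mult[of n K] by simp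
    finally have "(2 * (n choose K)) * Suc K \<le> ((n choose Suc K) * q) * Suc K"
      by (simp add: algebra_simps)
    then have "2 * (n choose K) \<le> (n choose Suc K) * q" by (metis mult_le_cancel2 zero_less_Suc)
    then have "2 * (n choose K) * q ^ (K - 1) \<le> (n choose Suc K) * q * q ^ (K - 1)"
      by (rule mult_le_mono1)
    also have "\<dots> = (n choose Suc K) * q ^ K" using False by (cases K) auto
    finally have "2 * (n choose K) * q ^ (K - 1) \<le> (n choose Suc K) * q ^ K" .
    moreover have "(\<Sum>j=1..K. (n choose j) * q ^ (j - 1)) \<le> 2 * (n choose K) * q ^ (K - 1)"
      using Suc False by simp
    ultimately have "(\<Sum>j=1..K. (n choose j) * q ^ (j - 1)) + (n choose Suc K) * q ^ K
        \<le> 2 * ((n choose Suc K) * q ^ K)" by linarith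
    then show ?thesis by (simp add: mult.assoc)
  qed
qed

lemma sum_binomial_powers_less:
  fixes q n k :: nat
  assumes q: "q > 2 * (n - k) * ((n - 1) choose (k - 1))" and k1: "1 \<le> k" and nk: "k + 3 \<le> n"
  shows "(\<Sum>j=1..k. (n choose j) * q ^ (j - 1)) < q ^ k"
proof (cases "k = 1")
  case True
  then show ?thesis using q nk by simp
next
  case False
  have "k \<le> (n - k) * ((n - 1) choose (k - 1))" using le_mult_binomial[OF k1] nk by simp
  then have "q \<ge> 2 * k" using q by linarith
  then have sum_le: "(\<Sum>j=1..k. (n choose j) * q ^ (j - 1)) \<le> 2 * (n choose k) * q ^ (k - 1)"
    using sum_binomial_powers_le k1 nk by simp
  have "n \<le> k * (n - k)"
  proof -
    have "(k - 1) * 3 \<le> (k - 1) * (n - k)" using nk by (intro mult_le_mono2) simp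
    then have "k \<le> (k - 1) * (n - k)" using False k1 by linarith
    then have "(n - k) + k \<le> k * (n - k)" using False k1 by (cases k) auto
    then show ?thesis using nk by linarith
  qed
  moreover have "k * (n choose k) = n * ((n - 1) choose (k - 1))"
    using times_binomial_minus1_eq[of k n] k1 by simp
  ultimately have "k * (2 * (n choose k)) \<le> 2 * (k * (n - k)) * ((n - 1) choose (k - 1))"
    by (metis mult.assoc mult.left_commute mult_le_mono1 mult_le_mono2)
  also have "\<dots> = k * (2 * (n - k) * ((n - 1) choose (k - 1)))" by simp
  also have "\<dots> < k * q" using q k1 by simp
  finally have "2 * (n choose k) < q" by simp
  then have "2 * (n choose k) * q ^ (k - 1) < q ^ k" using k1 by (cases k) auto
  then show ?thesis using sum_le by linarith
qed

lemma gt_if_gt_binomial_bound: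
  fixes q n k :: nat
  assumes q: "q > 2 * (n - k) * ((n - 1) choose (k - 1))" and "1 \<le> k" "k < n"
  shows "n < q"
proof -
  have "1 \<le> (n - 1) choose (k - 1)" using assms by (simp add: Suc_leI zero_less_binomial)
  then have "n - k \<le> (n - k) * ((n - 1) choose (k - 1))" by simp
  then show ?thesis using q le_mult_binomial[OF assms(2,3)] by linarith
qed

lemma blk_start_Suc: "blk_start l r (Suc i) = blk_start l r i + (r i + l)"
  by (simp add: blk_start_def)

lemma blk_start_mono: "i \<le> i' \<Longrightarrow> blk_start l r i \<le> blk_start l r i'"
  unfolding blk_start_def by (rule sum_mono2) auto

lemma blk_disjoint: "i \<noteq> i' \<Longrightarrow> blk l r i \<inter> blk l r i' = {}"
proof -
  have *: "blk l r i \<inter> blk l r i' = {}" if "i < i'" for i i'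
    using blk_start_mono[of "Suc i" i' l r] that by (auto simp: blk_def blk_start_Suc)
  assume "i \<noteq> i'"
  then show ?thesis using *[of i i'] *[of i' i] by (cases "i < i'") auto
qed

lemma UN_blk: "(\<Union>i<m. blk l r i) = {0..<blk_start l r m}"
proof (induction m)
  case 0 then show ?case by (simp add: blk_start_def)
next
  case (Suc m)
  have "(\<Union>i<Suc m. blk l r i) = (\<Union>i<m. blk l r i) \<union> blk l r m"
    by (simp add: lessThan_Suc Un_commute)
  also have "\<dots> = {0..<blk_start l r (Suc m)}" using Suc by (auto simp: blk_def blk_start_Suc)
  finally show ?case .
qed

lemma card_blk: "card (blk l r i) = r i + l"
  by (simp add: blk_def)

lemma finite_blk: "finite (blk l r i)"
  by (simp add: blk_def)

lemma card_blk_Diff: "E \<subseteq> blk l r i \<Longrightarrow> card E = r i \<Longrightarrow> card (blk l r i - E) = l"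
  using finite_subset[OF _ finite_blk] by (simp add: card_Diff_subset card_blk)

lemma blk_Int_erased:
  assumes "\<forall>i<m. E i \<subseteq> blk l r i" "i < m"
  shows "({0..<blk_start l r m} - (\<Union>i<m. E i)) \<inter> blk l r i = blk l r i - E i"
proof
  show "blk l r i - E i \<subseteq> ({0..<blk_start l r m} - (\<Union>i<m. E i)) \<inter> blk l r i"
  proof
    fix x assume x: "x \<in> blk l r i - E i"
    have "x \<notin> E i'" if "i' < m" for i'
      using assms(1) that x blk_disjoint[of i' i l r] by (cases "i' = i") auto
    moreover have "x \<in> {0..<blk_start l r m}" using x assms(2) UN_blk[of l r m] by blast
    ultimately show "x \<in> ({0..<blk_start l r m} - (\<Union>i<m. E i)) \<inter> blk l r i" using x by blast
  qed
qed (use assms(2) in blast)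

lemma card_erased:
  assumes E: "\<forall>i<m. E i \<subseteq> blk l r i \<and> card (E i) = r i"
  shows "card ({0..<blk_start l r m} - (\<Union>i<m. E i)) = m * l"
proof -
  let ?J = "{0..<blk_start l r m} - (\<Union>i<m. E i)"
  have "?J = (\<Union>i<m. ?J \<inter> blk l r i)" using UN_blk[of l r m] by blast
  also have "\<dots> = (\<Union>i<m. blk l r i - E i)"
    using blk_Int_erased[of m E l r] E by (intro SUP_cong) auto
  finally have "?J = (\<Union>i<m. blk l r i - E i)" .
  moreover have "card (\<Union>i<m. blk l r i - E i) = (\<Sum>i<m. card (blk l r i - E i))"
    by (intro card_UN_disjoint) (auto simp: finite_blk, metis IntI blk_disjoint empty_iff)
  moreover have "card (blk l r i - E i) = l" if "i < m" for i
    using E that card_blk_Diff by blast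
  ultimately show ?thesis by simp
qed

definition blk_head :: "nat \<Rightarrow> (nat \<Rightarrow> nat) \<Rightarrow> nat \<Rightarrow> nat set" where
  "blk_head l r i = {blk_start l r i ..< blk_start l r i + l}"

lemma blk_head_subset: "blk_head l r i \<subseteq> blk l r i"
  by (auto simp: blk_head_def blk_def)

lemma card_blk_head: "card (blk_head l r i) = l"
  by (simp add: blk_head_def)

lemma finite_blk_head: "finite (blk_head l r i)"
  by (simp add: blk_head_def)

lemma blk_head_Int_blk: "i \<noteq> i' \<Longrightarrow> blk_head l r i \<inter> blk l r i' = {}"
  using blk_disjoint[of i i' l r] blk_head_subset[of l r i] by blast

lemma UN_blk_head_Int_blk: "(\<Union>i<m. blk_head l r i) \<inter> blk l r i' \<subseteq> blk_head l r i'"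
proof
  fix x assume "x \<in> (\<Union>i<m. blk_head l r i) \<inter> blk l r i'"
  then obtain i where "x \<in> blk_head l r i" "x \<in> blk l r i'" by blast
  then show "x \<in> blk_head l r i'" using blk_head_Int_blk[of i i' l r] by (cases "i = i'") auto
qed

lemma card_UN_blk_head: "card (\<Union>i<m. blk_head l r i) = m * l"
proof -
  have "card (\<Union>i<m. blk_head l r i) = (\<Sum>i<m. card (blk_head l r i))"
  proof (rule card_UN_disjoint)
    show "\<forall>i\<in>{..<m}. \<forall>i'\<in>{..<m}. i \<noteq> i' \<longrightarrow> blk_head l r i \<inter> blk_head l r i' = {}"
      using blk_head_Int_blk blk_head_subset by blast
  qed (auto simp: finite_blk_head)
  then show ?thesis by (simp add: card_blk_head)
qed

lemma exists_subset_blk_head: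
  assumes "i < m" "l \<le> k" "k \<le> m * l"
  shows "\<exists>T. T \<subseteq> {0..<blk_start l r m} \<and> card T = k \<and> (\<forall>i'<m. card (T \<inter> blk l r i') \<le> l)
    \<and> blk_head l r i \<subseteq> T"
proof -
  let ?U = "\<Union>i'<m. blk_head l r i'"
  have head_U: "blk_head l r i \<subseteq> ?U" using assms(1) by blast
  have "card (?U - blk_head l r i) = m * l - l"
    using card_Diff_subset[OF finite_blk_head head_U] by (simp add: card_UN_blk_head card_blk_head)
  then have "k - l \<le> card (?U - blk_head l r i)" using assms by simp
  then obtain R where R: "R \<subseteq> ?U - blk_head l r i" "card R = k - l" "finite R"
    by (rule obtain_subset_with_card_n)
  let ?T = "blk_head l r i \<union> R"
  have "card ?T = k" using R assms(2) by (subst card_Un_disjoint) (auto simp: finite_blk_head card_blk_head)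
  moreover have "?U \<subseteq> (\<Union>i'<m. blk l r i')" by (intro UN_mono) (auto simp: blk_head_subset)
  then have "?T \<subseteq> {0..<blk_start l r m}" using R head_U by (simp only: UN_blk) blast
  moreover have "card (?T \<inter> blk l r i') \<le> l" for i'
  proof -
    have "?T \<inter> blk l r i' \<subseteq> blk_head l r i'" using R head_U UN_blk_head_Int_blk by blast
    then show ?thesis using card_mono[OF finite_blk_head] card_blk_head by metis
  qed
  ultimately show ?thesis by blast
qed

section \<open>The greedy construction of the generator matrix\<close>

locale pmds_construction =
  fixes m l n k :: nat and r :: "nat \<Rightarrow> nat" and w :: "nat \<Rightarrow> 'a::{finite,field}"
  assumes n_eq: "n = (\<Sum>i<m. r i + l)"
    and l_pos: "1 \<le> l" and l_le_k: "l \<le> k" and k_less: "k < m * l"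
    and inj_w: "inj_on w {0..<n}" and w_nonzero: "\<forall>j<n. w j \<noteq> 0"
    and counting: "(\<Sum>j=1..k. (n choose j) * card (UNIV :: 'a set) ^ (j - 1)) < card (UNIV :: 'a set) ^ k"
begin

abbreviation B where "B i \<equiv> blk l r i"

text \<open>\<open>F i t\<close> is the t-th column of the k x l matrix F_i, so the generator column at a
  coordinate j of block i is F_i (1, w_j, ..., w_j^(l-1)).\<close>
definition column :: "(nat \<Rightarrow> nat \<Rightarrow> nat \<Rightarrow> 'a) \<Rightarrow> nat \<Rightarrow> nat \<Rightarrow> 'a" where
  "column F j = (\<lambda>s. \<Sum>i<m. if j \<in> B i then (\<Sum>t<l. w j ^ t * F i t s) else 0)"

definition admissible :: "(nat \<Rightarrow> nat) \<Rightarrow> nat set \<Rightarrow> bool" where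
  "admissible cap T \<longleftrightarrow> T \<subseteq> {0..<n} \<and> card T \<le> k \<and> (\<forall>i<m. card (T \<inter> B i) \<le> cap i)"

text \<open>The invariant of the construction once the first \<open>cap i\<close> columns of each F_i are chosen.\<close>
definition partial_design :: "(nat \<Rightarrow> nat \<Rightarrow> nat \<Rightarrow> 'a) \<Rightarrow> (nat \<Rightarrow> nat) \<Rightarrow> bool" where
  "partial_design F cap \<longleftrightarrow> (\<forall>i t. F i t \<in> vecs k) \<and> (\<forall>i t. cap i \<le> t \<longrightarrow> F i t = 0)
     \<and> (\<forall>T. admissible cap T \<longrightarrow> lin_indep (column F) T)"

lemma UN_B: "(\<Union>i<m. B i) = {0..<n}"
  using UN_blk[of l r m] n_eq by (simp add: blk_start_def)

lemma B_subset: "i < m \<Longrightarrow> B i \<subseteq> {0..<n}"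
  using UN_B by blast

lemma column_blk:
  assumes "i < m" "j \<in> B i"
  shows "column F j s = (\<Sum>t<l. w j ^ t * F i t s)"
proof -
  have "(\<Sum>i'<m. if j \<in> B i' then (\<Sum>t<l. w j ^ t * F i' t s) else 0)
      = (\<Sum>i'<m. if i' = i then (\<Sum>t<l. w j ^ t * F i' t s) else 0)"
    using assms blk_disjoint[of _ i l r] by (intro sum.cong) auto
  then show ?thesis using assms(1) by (simp add: column_def)
qed

lemma column_vecs: "(\<forall>i t. F i t \<in> vecs k) \<Longrightarrow> column F j \<in> vecs k"
  by (auto simp: column_def vecs_def intro!: sum.neutral)

lemma admissible_finite: "admissible cap T \<Longrightarrow> finite T"
  unfolding admissible_def using finite_subset by blast

lemma admissible_update_subset:
  assumes T: "admissible (cap(i := u)) T" and sub: "T' \<subseteq> T" and cap: "card (T' \<inter> B i) \<le> cap i"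
  shows "admissible cap T'"
  unfolding admissible_def
proof (intro conjI allI impI)
  have fT: "finite T" using T admissible_finite by blast
  show "T' \<subseteq> {0..<n}" using T sub unfolding admissible_def by blast
  show "card T' \<le> k" using card_mono[OF fT sub] T unfolding admissible_def by linarith
  fix i' assume "i' < m"
  show "card (T' \<inter> B i') \<le> cap i'"
  proof (cases "i' = i")
    case False
    have "card (T' \<inter> B i') \<le> card (T \<inter> B i')" using fT sub by (intro card_mono) auto
    then show ?thesis using T \<open>i' < m\<close> False unfolding admissible_def by fastforce
  qed (use cap in simp)
qed

lemma lincomb_column_block:
  assumes D: "partial_design F cap" and i: "i < m" "cap i \<le> l" and A: "A \<subseteq> B i"
  shows "lincomb (column F) A a s = (\<Sum>t<cap i. (\<Sum>j\<in>A. a j * w j ^ t) * F i t s)"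
proof -
  have "column F j s = (\<Sum>t<cap i. w j ^ t * F i t s)" if "j \<in> A" for j
  proof -
    have "column F j s = (\<Sum>t<l. w j ^ t * F i t s)" using column_blk i A that by blast
    also have "\<dots> = (\<Sum>t<cap i. w j ^ t * F i t s)"
      using D i unfolding partial_design_def by (intro sum.mono_neutral_right) auto
    finally show ?thesis .
  qed
  then have "lincomb (column F) A a s = (\<Sum>j\<in>A. a j * (\<Sum>t<cap i. w j ^ t * F i t s))"
    unfolding lincomb_def by (intro sum.cong) auto
  then show ?thesis by (simp add: sum_mult_sum_swap)
qed

lemma lincomb_column_block_eq:
  assumes "partial_design F cap" "i < m" "cap i \<le> l" "A \<subseteq> B i" "A' \<subseteq> B i"
    and "\<forall>t<cap i. (\<Sum>j\<in>A. a j * w j ^ t) = (\<Sum>j\<in>A'. a' j * w j ^ t)"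
  shows "lincomb (column F) A a = lincomb (column F) A' a'"
  using lincomb_column_block[OF assms(1-4)] lincomb_column_block[OF assms(1-3,5)] assms(6)
  by (simp add: fun_eq_iff)

text \<open>If \<open>T\<close> meets block \<open>i\<close> in \<open>u + 1\<close> coordinates, the Vandermonde columns let us move
  the moments of the dependency onto \<open>u\<close> of them, which gives a dependency on a set that
  was admissible before \<open>F i u\<close> was chosen.\<close>
lemma block_moments_vanish:
  assumes D: "partial_design F cap" and i: "i < m" "cap i = u" "u < l"
    and T: "admissible (cap(i := Suc u)) T" and c: "lincomb (column F) T c = (\<lambda>_. 0)"
  shows "\<forall>t<u. (\<Sum>j\<in>T \<inter> B i. c j * w j ^ t) = 0"
proof (cases "card (T \<inter> B i) \<le> u")
  case True
  then have "admissible cap T" using admissible_update_subset[OF T subset_refl] i by simp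
  then have "\<forall>j\<in>T. c j = 0" using D c unfolding partial_design_def lin_indep_def by blast
  then show ?thesis by simp
next
  case False
  define Ti where "Ti = T \<inter> B i"
  have fT: "finite T" using T admissible_finite by blast
  have "card Ti \<le> Suc u" using T i unfolding admissible_def Ti_def by auto
  then have card_Ti: "card Ti = Suc u" using False by (simp add: Ti_def)
  then obtain j1 where j1: "j1 \<in> Ti" by (metis card.empty ex_in_conv nat.distinct(1))
  define Ti' where "Ti' = Ti - {j1}"
  have fTi': "finite Ti'" using fT by (simp add: Ti'_def Ti_def)
  have card_Ti': "card Ti' = u" using card_Ti j1 by (simp add: Ti'_def)
  have "Ti' \<subseteq> {0..<n}" using T unfolding admissible_def Ti'_def Ti_def by blast
  then have "inj_on w Ti'" using inj_w inj_on_subset by blast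
  then obtain d where d: "\<forall>t<u. (\<Sum>j\<in>Ti. c j * w j ^ t) = (\<Sum>j\<in>Ti'. d j * w j ^ t)"
    using exists_moments[OF fTi' _ card_Ti', where v = "\<lambda>t. if t < u then \<Sum>j\<in>Ti. c j * w j ^ t else 0"]
    by (auto simp: vecs_def)
  have same: "lincomb (column F) Ti' d = lincomb (column F) Ti c"
    by (rule lincomb_column_block_eq[OF D i(1)]) (use d i in \<open>auto simp: Ti'_def Ti_def\<close>)
  have "Ti \<subseteq> T" "Ti' \<subseteq> Ti" by (auto simp: Ti_def Ti'_def)
  then have dep: "lincomb (column F) ((T - Ti) \<union> Ti') (\<lambda>j. if j \<in> Ti' then d j else c j) = (\<lambda>_. 0)"
    using lincomb_replace[OF fT _ _ same] c by simp
  have "admissible cap ((T - Ti) \<union> Ti')"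
  proof (rule admissible_update_subset[OF T])
    show "(T - Ti) \<union> Ti' \<subseteq> T" by (auto simp: Ti'_def Ti_def)
    have "((T - Ti) \<union> Ti') \<inter> B i = Ti'" by (auto simp: Ti'_def Ti_def)
    then show "card (((T - Ti) \<union> Ti') \<inter> B i) \<le> cap i" using card_Ti' i by simp
  qed
  then have "\<forall>j\<in>(T - Ti) \<union> Ti'. (if j \<in> Ti' then d j else c j) = 0"
    using D dep unfolding partial_design_def lin_indep_def by blast
  then have "\<forall>j\<in>Ti'. d j = 0" by (metis UnI2)
  then show ?thesis using d by (simp add: Ti_def)
qed

definition new_coeff :: "nat \<Rightarrow> nat \<Rightarrow> nat set \<Rightarrow> (nat \<Rightarrow> 'a) \<Rightarrow> 'a" where
  "new_coeff i u T c = (\<Sum>j\<in>T \<inter> B i. c j * w j ^ u)"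

lemma lin_indep_if_new_coeff_zero:
  assumes D: "partial_design F cap" and i: "i < m" "cap i = u" "u < l"
    and T: "admissible (cap(i := Suc u)) T"
    and c: "lincomb (column F) T c = (\<lambda>_. 0)" and new: "new_coeff i u T c = 0"
  shows "\<forall>j\<in>T. c j = 0"
proof -
  define Ti where "Ti = T \<inter> B i"
  have fT: "finite T" using T admissible_finite by blast
  then have fTi: "finite Ti" by (simp add: Ti_def)
  have moments: "\<forall>t<Suc u. (\<Sum>j\<in>Ti. c j * w j ^ t) = 0"
    using block_moments_vanish[OF D i T c] new by (auto simp: Ti_def new_coeff_def less_Suc_eq)
  have card_Ti: "card Ti \<le> Suc u" using T i unfolding admissible_def Ti_def by auto
  have "Ti \<subseteq> {0..<n}" using T unfolding admissible_def Ti_def by blast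
  with inj_w have "inj_on w Ti" by (rule inj_on_subset)
  then have Ti0: "\<forall>j\<in>Ti. c j = 0" by (rule vandermonde_coeffs_zero[OF fTi _ card_Ti moments])
  have "lincomb (column F) (T - Ti) c = (\<lambda>_. 0)"
  proof
    fix s
    have "lincomb (column F) Ti c s = 0" using Ti0 by (simp add: lincomb_def)
    then show "lincomb (column F) (T - Ti) c s = 0"
      using lincomb_split[OF fT, of Ti "column F" c s] c by (simp add: Ti_def)
  qed
  moreover have "admissible cap (T - Ti)"
  proof (rule admissible_update_subset[OF T])
    have "(T - Ti) \<inter> B i = {}" by (auto simp: Ti_def)
    then show "card ((T - Ti) \<inter> B i) \<le> cap i" by simp
  qed blast
  ultimately have "\<forall>j\<in>T - Ti. c j = 0" using D unfolding partial_design_def lin_indep_def by blast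
  with Ti0 show ?thesis by blast
qed

lemma column_update:
  assumes i: "i < m" and u: "u < l" and F0: "F i u = 0"
  shows "column (F(i := (F i)(u := f))) j s = column F j s + (if j \<in> B i then w j ^ u * f s else 0)"
proof -
  let ?F' = "F(i := (F i)(u := f))"
  have inner: "(\<Sum>t<l. w j ^ t * ?F' i' t s)
      = (\<Sum>t<l. w j ^ t * F i' t s) + (if i' = i then w j ^ u * f s else 0)" for i'
  proof -
    have "(\<Sum>t<l. w j ^ t * ?F' i' t s)
        = (\<Sum>t<l. w j ^ t * F i' t s + (if t = u then (if i' = i then w j ^ t * f s else 0) else 0))"
      using F0 by (intro sum.cong) (auto simp: distrib_left)
    then show ?thesis using u by (simp add: sum.distrib sum.delta)
  qed
  have "column ?F' j s = (\<Sum>i'<m. (if j \<in> B i' then (\<Sum>t<l. w j ^ t * F i' t s) else 0)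
      + (if i' = i then (if j \<in> B i then w j ^ u * f s else 0) else 0))"
    unfolding column_def inner by (intro sum.cong) auto
  then show ?thesis unfolding column_def sum.distrib using i by (simp add: sum.delta)
qed

lemma lincomb_column_update:
  assumes "i < m" "u < l" "F i u = 0" "finite T"
  shows "lincomb (column (F(i := (F i)(u := f)))) T c s = lincomb (column F) T c s + new_coeff i u T c * f s"
proof -
  have "lincomb (column (F(i := (F i)(u := f)))) T c s
      = (\<Sum>j\<in>T. c j * column F j s + (if j \<in> B i then c j * w j ^ u * f s else 0))"
    unfolding lincomb_def column_update[where F=F and i=i and u=u, OF assms(1-3)] by (intro sum.cong) (auto simp: algebra_simps)
  also have "\<dots> = lincomb (column F) T c s + (\<Sum>j\<in>T \<inter> B i. c j * w j ^ u * f s)"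
    unfolding lincomb_def sum.distrib by (simp add: sum.inter_restrict[OF assms(4)])
  finally show ?thesis by (simp add: new_coeff_def sum_distrib_right)
qed

text \<open>The choices of the new column \<open>F i u\<close> that create a dependency on \<open>T\<close> whose
  coefficients \<open>c\<close> are normalised by \<open>new_coeff i u T c = 1\<close>.\<close>
definition bad_for :: "(nat \<Rightarrow> nat \<Rightarrow> nat \<Rightarrow> 'a) \<Rightarrow> nat \<Rightarrow> nat \<Rightarrow> nat set \<Rightarrow> (nat \<Rightarrow> 'a) set" where
  "bad_for F i u T = (\<lambda>c. - lincomb (column F) T c) ` {c \<in> PiE T (\<lambda>_. UNIV). new_coeff i u T c = 1}"

definition bad :: "(nat \<Rightarrow> nat \<Rightarrow> nat \<Rightarrow> 'a) \<Rightarrow> nat \<Rightarrow> nat \<Rightarrow> (nat \<Rightarrow> 'a) set" where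
  "bad F i u = (\<Union>j\<in>{1..k}. \<Union>T\<in>{T. T \<subseteq> {0..<n} \<and> card T = j \<and> T \<inter> B i \<noteq> {}}. bad_for F i u T)"

lemma card_bad_for:
  assumes fT: "finite T" and Tn: "T \<subseteq> {0..<n}" and j0: "j0 \<in> T \<inter> B i"
  shows "card (bad_for F i u T) \<le> card (UNIV :: 'a set) ^ (card T - 1)"
proof -
  let ?D = "{c \<in> PiE T (\<lambda>_. UNIV). new_coeff i u T c = 1}"
  have "w j0 ^ u \<noteq> 0" using w_nonzero j0 Tn by auto
  have new_coeff_split: "new_coeff i u T c = c j0 * w j0 ^ u + (\<Sum>j\<in>T \<inter> B i - {j0}. c j * w j ^ u)" for c
    unfolding new_coeff_def using sum.remove[OF _ j0] fT by simp
  have "inj_on (\<lambda>c. restrict c (T - {j0})) ?D"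
  proof (rule inj_onI)
    fix c c' assume c: "c \<in> ?D" and c': "c' \<in> ?D" and eq: "restrict c (T - {j0}) = restrict c' (T - {j0})"
    have agree: "c j = c' j" if "j \<in> T - {j0}" for j using fun_cong[OF eq, of j] that by simp
    then have "(\<Sum>j\<in>T \<inter> B i - {j0}. c j * w j ^ u) = (\<Sum>j\<in>T \<inter> B i - {j0}. c' j * w j ^ u)"
      by (intro sum.cong) auto
    moreover have "new_coeff i u T c = new_coeff i u T c'" using c c' by simp
    ultimately have "c j0 * w j0 ^ u = c' j0 * w j0 ^ u" unfolding new_coeff_split by simp
    then have "c j0 = c' j0" using \<open>w j0 ^ u \<noteq> 0\<close> by (metis mult_cancel_right)
    show "c = c'"
    proof
      fix x show "c x = c' x"
        using agree \<open>c j0 = c' j0\<close> c c' by (cases "x \<in> T"; cases "x = j0") (auto simp: PiE_def extensional_def)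
    qed
  qed
  then have "card ?D \<le> card (PiE (T - {j0}) (\<lambda>_. UNIV :: 'a set))"
    using fT by (intro card_inj_on_le) (auto simp: finite_PiE)
  also have "\<dots> = card (UNIV :: 'a set) ^ (card T - 1)" using fT j0 by (simp add: card_PiE)
  finally have "card ?D \<le> card (UNIV :: 'a set) ^ (card T - 1)" .
  moreover have "finite ?D" using fT by (simp add: finite_PiE)
  then have "card (bad_for F i u T) \<le> card ?D" unfolding bad_for_def by (rule card_image_le)
  ultimately show ?thesis by linarith
qed

lemma finite_bad_for: "finite T \<Longrightarrow> finite (bad_for F i u T)"
  unfolding bad_for_def by (simp add: finite_PiE)

lemma finite_bad: "finite (bad F i u)"
  unfolding bad_def
  by (intro finite_UN_I finite_atLeastAtMost finite_bad_for)
     (auto intro: finite_subset[of _ "Pow {0..<n}"] finite_subset[of _ "{0..<n}"])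

lemma card_bad_less: "card (bad F i u) < card (UNIV :: 'a set) ^ k"
proof -
  let ?q = "card (UNIV :: 'a set)"
  define Fam where "Fam j = {T. T \<subseteq> {0..<n} \<and> card T = j \<and> T \<inter> B i \<noteq> {}}" for j
  have finite_Fam: "finite (Fam j)" for j
    by (rule finite_subset[of _ "Pow {0..<n}"]) (auto simp: Fam_def)
  have card_Fam: "card (Fam j) \<le> n choose j" for j
  proof -
    have "card (Fam j) \<le> card {T. T \<subseteq> {0..<n} \<and> card T = j}"
      by (rule card_mono) (auto simp: Fam_def intro: finite_subset[of _ "Pow {0..<n}"])
    then show ?thesis by (simp add: n_subsets)
  qed
  have card_Fam_bad: "card (\<Union>T\<in>Fam j. bad_for F i u T) \<le> (n choose j) * ?q ^ (j - 1)" for j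
  proof -
    have "card (\<Union>T\<in>Fam j. bad_for F i u T) \<le> (\<Sum>T\<in>Fam j. card (bad_for F i u T))"
      by (rule card_UN_le[OF finite_Fam])
    also have "\<dots> \<le> (\<Sum>T\<in>Fam j. ?q ^ (j - 1))"
    proof (rule sum_mono)
      fix T assume "T \<in> Fam j"
      then have T: "T \<subseteq> {0..<n}" "card T = j" "T \<inter> B i \<noteq> {}" by (auto simp: Fam_def)
      then show "card (bad_for F i u T) \<le> ?q ^ (j - 1)"
        using card_bad_for[OF finite_subset[OF T(1)] T(1)] by auto
    qed
    also have "\<dots> \<le> (n choose j) * ?q ^ (j - 1)" using card_Fam by simp
    finally show ?thesis .
  qed
  have "card (bad F i u) \<le> (\<Sum>j=1..k. card (\<Union>T\<in>Fam j. bad_for F i u T))"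
    unfolding bad_def Fam_def by (rule card_UN_le) simp
  also have "\<dots> \<le> (\<Sum>j=1..k. (n choose j) * ?q ^ (j - 1))" by (rule sum_mono) (rule card_Fam_bad)
  also have "\<dots> < ?q ^ k" by (rule counting)
  finally show ?thesis .
qed

lemma mem_bad_if_dependent:
  assumes T: "T \<subseteq> {0..<n}" "finite T" "card T \<le> k"
    and dep: "\<And>s. lincomb (column F) T c s + new_coeff i u T c * f s = 0"
    and nz: "new_coeff i u T c \<noteq> 0"
  shows "f \<in> bad F i u"
proof -
  define c' where "c' = restrict (\<lambda>j. c j / new_coeff i u T c) T"
  have "new_coeff i u T c' = 1"
    using nz by (simp add: c'_def new_coeff_def sum_divide_distrib[symmetric])
  moreover have "f = - lincomb (column F) T c'"
  proof
    fix s
    have "lincomb (column F) T c s = new_coeff i u T c * lincomb (column F) T c' s"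
      unfolding lincomb_def c'_def sum_distrib_left using nz by (intro sum.cong) auto
    then have "new_coeff i u T c * (f s + lincomb (column F) T c' s) = 0"
      using dep[of s] by (simp add: algebra_simps)
    then show "f s = (- lincomb (column F) T c') s" using nz by (simp add: eq_neg_iff_add_eq_0)
  qed
  ultimately have "f \<in> bad_for F i u T" unfolding bad_for_def by (auto simp: c'_def)
  moreover have "T \<inter> B i \<noteq> {}" using nz unfolding new_coeff_def by auto
  moreover have "card T \<in> {1..k}"
    using calculation(2) T by (auto simp: Suc_le_eq card_gt_0_iff)
  ultimately show ?thesis using T(1) unfolding bad_def by blast
qed

lemma partial_design_extend:
  assumes D: "partial_design F cap" and i: "i < m" "cap i = u" "u < l"
    and f: "f \<in> vecs k" "f \<notin> bad F i u"
  shows "partial_design (F(i := (F i)(u := f))) (cap(i := Suc u))"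
  unfolding partial_design_def
proof (intro conjI allI impI)
  have F0: "F i u = 0" using D i unfolding partial_design_def by blast
  fix T assume T: "admissible (cap(i := Suc u)) T"
  have fT: "finite T" using T admissible_finite by blast
  show "lin_indep (column (F(i := (F i)(u := f)))) T"
    unfolding lin_indep_def
  proof (intro allI impI)
    fix c assume "lincomb (column (F(i := (F i)(u := f)))) T c = (\<lambda>_. 0)"
    then have dep: "lincomb (column F) T c s + new_coeff i u T c * f s = 0" for s
      using lincomb_column_update[where F=F and i=i and u=u, OF i(1,3) F0 fT] by (metis fun_cong)
    have "new_coeff i u T c = 0"
      using mem_bad_if_dependent[OF _ fT _ dep] T f(2) unfolding admissible_def by blast
    moreover have "lincomb (column F) T c = (\<lambda>_. 0)" using dep calculation by auto
    ultimately show "\<forall>j\<in>T. c j = 0" using lin_indep_if_new_coeff_zero[OF D i T] by blast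
  qed
qed (use D f i in \<open>auto simp: partial_design_def\<close>)

lemma partial_design_step:
  assumes "partial_design F cap" "i < m" "cap i = u" "u < l"
  shows "\<exists>F'. partial_design F' (cap(i := Suc u))"
proof -
  have "\<not> vecs k \<subseteq> bad F i u"
    using card_bad_less[of F i u] card_mono[OF finite_bad] by (metis card_vecs not_less)
  then obtain f where "f \<in> vecs k" "f \<notin> bad F i u" by blast
  then show ?thesis using partial_design_extend[OF assms] by blast
qed

lemma partial_design_zero: "partial_design (\<lambda>_ _. 0) (\<lambda>_. 0)"
  unfolding partial_design_def
proof (intro conjI allI impI)
  fix T assume T: "admissible (\<lambda>_. 0) T"
  then have "T \<inter> B i = {}" if "i < m" for i
    using that admissible_finite[OF T] unfolding admissible_def by auto
  moreover have "T \<subseteq> (\<Union>i<m. B i)" using T UN_B unfolding admissible_def by blast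
  ultimately have "T = {}" by blast
  then show "lin_indep (column (\<lambda>_ _. 0)) T" by (simp add: lin_indep_def)
qed (auto simp: vecs_def)

lemma partial_design_fill_block:
  assumes "partial_design F cap" "i < m" "cap i = 0"
  shows "u \<le> l \<Longrightarrow> \<exists>F'. partial_design F' (cap(i := u))"
proof (induction u)
  case 0
  have "cap(i := 0) = cap" using assms(3) by auto
  then show ?case using assms(1) by auto
next
  case (Suc u)
  then obtain F' where F': "partial_design F' (cap(i := u))" by (auto simp del: fun_upd_apply)
  have "\<exists>F''. partial_design F'' ((cap(i := u))(i := Suc u))"
    by (rule partial_design_step[OF F' assms(2)]) (use Suc.prems in simp_all)
  then show ?case by (simp del: fun_upd_apply)
qed

lemma exists_design:
  "\<exists>F. (\<forall>i t. F i t \<in> vecs k) \<and> (\<forall>T. admissible (\<lambda>_. l) T \<longrightarrow> lin_indep (column F) T)"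
proof -
  have "\<exists>F. partial_design F (\<lambda>i'. if i' < i then l else 0)" if "i \<le> m" for i
    using that
  proof (induction i)
    case 0
    have "(\<lambda>i'::nat. if i' < 0 then l else 0) = (\<lambda>_. 0)" by simp
    then show ?case using partial_design_zero by metis
  next
    case (Suc i)
    then obtain F where "partial_design F (\<lambda>i'. if i' < i then l else 0)" by auto
    then have "\<exists>F'. partial_design F' ((\<lambda>i'. if i' < i then l else 0)(i := l))"
      using Suc.prems by (intro partial_design_fill_block) auto
    moreover have "(\<lambda>i'. if i' < i then l else 0)(i := l) = (\<lambda>i'. if i' < Suc i then l else 0)"
      by auto
    ultimately show ?case by auto
  qed
  then obtain F where F: "partial_design F (\<lambda>i'. if i' < m then l else 0)" by blast
  have "admissible (\<lambda>i'. if i' < m then l else 0) T" if "admissible (\<lambda>_. l) T" for T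
    using that unfolding admissible_def by auto
  then show ?thesis using F unfolding partial_design_def by blast
qed

end

section \<open>The constructed code is PMDS\<close>

locale pmds_design = pmds_construction m l n k r w for m l n k r and w :: "nat \<Rightarrow> 'a::{finite,field}" +
  fixes F :: "nat \<Rightarrow> nat \<Rightarrow> nat \<Rightarrow> 'a"
  assumes F_vecs: "\<forall>i t. F i t \<in> vecs k"
    and F_indep: "\<forall>T. admissible (\<lambda>_. l) T \<longrightarrow> lin_indep (column F) T"
begin

abbreviation C where "C \<equiv> code_of {0..<n} (column F) k"

lemma full_rank_column:
  assumes "admissible (\<lambda>_. l) T" "card T = k"
  shows "full_rank k (column F) T"
  using assms F_indep by (intro lin_indep_imp_full_rank column_vecs[OF F_vecs] admissible_finite) auto

lemma exists_admissible_head: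
  assumes "i < m"
  shows "\<exists>T. admissible (\<lambda>_. l) T \<and> card T = k \<and> blk_head l r i \<subseteq> T"
  using exists_subset_blk_head[OF assms l_le_k, of r] k_less n_eq
  unfolding admissible_def by (auto simp: blk_start_def)

definition block_coeffs :: "nat \<Rightarrow> (nat \<Rightarrow> 'a) \<Rightarrow> nat \<Rightarrow> 'a" where
  "block_coeffs i x = (\<lambda>t. if t < l then dot k x (F i t) else 0)"

lemma block_coeffs_vecs: "block_coeffs i x \<in> vecs l"
  by (simp add: block_coeffs_def vecs_def)

lemma dot_column:
  assumes "i < m" "j \<in> B i"
  shows "dot k x (column F j) = dot l (block_coeffs i x) (powers l w j)"
proof -
  have "dot k x (column F j) = (\<Sum>s<k. \<Sum>t<l. w j ^ t * (x s * F i t s))"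
    unfolding dot_def using column_blk[OF assms] by (simp add: sum_distrib_left algebra_simps)
  also have "\<dots> = (\<Sum>t<l. w j ^ t * dot k x (F i t))"
    by (subst sum.swap) (simp add: dot_def sum_distrib_left)
  also have "\<dots> = dot l (block_coeffs i x) (powers l w j)"
    unfolding dot_def block_coeffs_def powers_def by (intro sum.cong) auto
  finally show ?thesis .
qed

lemma block_coeffs_surj:
  assumes i: "i < m"
  shows "block_coeffs i ` vecs k = vecs l"
proof
  show "block_coeffs i ` vecs k \<subseteq> vecs l" using block_coeffs_vecs by blast
  show "vecs l \<subseteq> block_coeffs i ` vecs k"
  proof
    fix y :: "nat \<Rightarrow> 'a" assume y: "y \<in> vecs l"
    obtain T where T: "admissible (\<lambda>_. l) T" "card T = k" "blk_head l r i \<subseteq> T"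
      using exists_admissible_head[OF i] by blast
    obtain x where x: "x \<in> vecs k" "\<forall>j\<in>T. dot k x (column F j) = dot l y (powers l w j)"
      using full_rank_dot_surj[OF admissible_finite[OF T(1)] T(2) full_rank_column[OF T(1,2)],
          where \<beta> = "\<lambda>j. dot l y (powers l w j)"] by blast
    have head: "blk_head l r i \<subseteq> B i" "blk_head l r i \<subseteq> {0..<n}"
      using blk_head_subset B_subset[OF i] by blast+
    have "full_rank l (powers l w) (blk_head l r i)"
      using inj_on_subset[OF inj_w head(2)] by (intro full_rank_powers) (auto simp: blk_head_def)
    moreover have "block_coeffs i x \<in> vecs l" by (rule block_coeffs_vecs)
    moreover have "\<forall>j\<in>blk_head l r i. dot l (block_coeffs i x) (powers l w j) = dot l y (powers l w j)"
    proof
      fix j assume "j \<in> blk_head l r i"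
      then have "j \<in> T" "j \<in> B i" using T(3) head(1) by blast+
      then show "dot l (block_coeffs i x) (powers l w j) = dot l y (powers l w j)"
        using x(2) dot_column[OF i, of j x] by simp
    qed
    ultimately have "block_coeffs i x = y" using y full_rank_dot_eqD by blast
    then show "y \<in> block_coeffs i ` vecs k" using x(1) by blast
  qed
qed

lemma local_mds:
  assumes i: "i < m"
  shows "mds_code (B i) l (puncture (B i) C)"
proof -
  have "code_of (B i) (column F) k = code_of (B i) (powers l w) l"
    by (rule code_of_factor[where \<phi> = "block_coeffs i"]) (auto simp: dot_column[OF i] block_coeffs_surj[OF i])
  moreover have "puncture (B i) C = code_of (B i) (column F) k"
    by (rule puncture_code_of[OF B_subset[OF i]])
  ultimately have "puncture (B i) C = code_of (B i) (powers l w) l" by simp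
  moreover have "mds_code (B i) l (code_of (B i) (powers l w) l)"
  proof (rule mds_code_of[OF _ finite_blk _ l_pos])
    fix S assume "S \<subseteq> B i" "card S = l"
    moreover have "inj_on w S" using inj_on_subset[OF inj_w] B_subset[OF i] calculation(1) by blast
    ultimately show "full_rank l (powers l w) S"
      using finite_subset[OF _ finite_blk] by (intro full_rank_powers) auto
  qed (simp add: card_blk)
  ultimately show ?thesis by simp
qed

lemma global_mds:
  assumes E: "\<forall>i<m. E i \<subseteq> B i \<and> card (E i) = r i"
  shows "mds_code ({0..<n} - (\<Union>i<m. E i)) k (puncture ({0..<n} - (\<Union>i<m. E i)) C)"
proof -
  define J where "J = {0..<n} - (\<Union>i<m. E i)"
  have n_blk: "n = blk_start l r m" using n_eq by (simp add: blk_start_def)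
  have "mds_code J k (code_of J (column F) k)"
  proof (rule mds_code_of)
    fix S assume S: "S \<subseteq> J" "card S = k"
    have "admissible (\<lambda>_. l) S"
      unfolding admissible_def
    proof (intro conjI allI impI)
      fix i assume i: "i < m"
      have "J \<inter> B i = B i - E i" using blk_Int_erased[of m E l r i] E i n_blk by (simp add: J_def)
      then have "card (S \<inter> B i) \<le> card (B i - E i)" using S(1) by (intro card_mono) (auto simp: finite_blk)
      then show "card (S \<inter> B i) \<le> l" using card_blk_Diff E i by simp
    qed (use S in \<open>auto simp: J_def\<close>)
    then show "full_rank k (column F) S" using full_rank_column S(2) by blast
  next
    show "k \<le> card J" using card_erased[OF E] n_blk k_less by (simp add: J_def)
  qed (use l_pos l_le_k in \<open>auto simp: J_def\<close>)
  moreover have "puncture J C = code_of J (column F) k" by (rule puncture_code_of) (simp add: J_def)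
  ultimately show ?thesis by (simp add: J_def)
qed

theorem is_pmds_code: "is_pmds n k l m r C"
proof -
  have "0 < m" using k_less by (cases m) auto
  then obtain T where T: "admissible (\<lambda>_. l) T" "card T = k" using exists_admissible_head by blast
  then have "code_dim C = k"
    using code_dim_code_of[OF _ _ full_rank_column[OF T]] unfolding admissible_def by blast
  moreover have "k < n"
  proof -
    have "m * l = (\<Sum>i<m. l)" by simp
    also have "\<dots> \<le> (\<Sum>i<m. r i + l)" by (rule sum_mono) simp
    also have "\<dots> = n" using n_eq by simp
    finally show ?thesis using k_less by simp
  qed
  moreover have "linear_code {0..<n} C" by (rule linear_code_code_of) simp
  ultimately show ?thesis unfolding is_pmds_def using n_eq local_mds global_mds by blast
qed

end

theorem corollary21:
  fixes m s l k n :: nat and r :: "nat \<Rightarrow> nat"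
  assumes "m \<ge> 2" and "s \<ge> 1" and "l \<ge> 1" and "\<forall>i<m. r i \<ge> 1"
    and "k = m * l - s" and "k \<ge> l"
    and "n = (\<Sum>i<m. l + r i)"
    and "card (UNIV :: 'a::{finite,field} set) > 2 * (n - k) * ((n - 1) choose (k - 1))"
  shows "\<exists>C :: (nat \<Rightarrow> 'a) set. is_pmds n k l m r C"
proof -
  have n_eq: "n = (\<Sum>i<m. r i + l)" using assms(7) by (simp add: add.commute)
  have k_pos: "1 \<le> k" using assms(3,6) by simp
  have "2 \<le> m * l" using assms(1,3) by (metis mult_le_mono nat_mult_1_right)
  then have k_less: "k < m * l" using assms(2,5) by simp
  have "(\<Sum>i<m. l + 1) \<le> (\<Sum>i<m. l + r i)" using assms(4) by (intro sum_mono) simp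
  then have "(\<Sum>i<m. l + 1) \<le> n" using assms(7) by simp
  then have n_ge: "k + 3 \<le> n" using k_less assms(1) by (simp add: algebra_simps)
  obtain w :: "nat \<Rightarrow> 'a" where "inj_on w {0..<n}" "\<forall>j<n. w j \<noteq> 0"
    using exists_inj_nonzero gt_if_gt_binomial_bound[OF assms(8) k_pos] n_ge by fastforce
  then interpret pmds_construction m l n k r w
    using n_eq assms(3,6) k_less sum_binomial_powers_less[OF assms(8) k_pos n_ge] by unfold_locales auto
  obtain F where "\<forall>i t. F i t \<in> vecs k" "\<forall>T. admissible (\<lambda>_. l) T \<longrightarrow> lin_indep (column F) T"
    using exists_design by blast
  then interpret pmds_design m l n k r w F by unfold_locales
  show ?thesis using is_pmds_code by blast
qed

end
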